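(* Let $\sum_{n=1}^{\infty}x_n$ be a divergent series of positive real terms with $\lim_{n\to\infty}x_n=0$. Then for every $x\geq 0$ there exists a permutation $\sigma$ of $\mathbb{N}$ such that the series $\sum_{n=1}^{\infty}(x_n-x_{\sigma(n)})$ converges and $\sum_{n=1}^{\infty}(x_n-x_{\sigma(n)})=x$.
   Context: $S_\infty$ denotes the set of all permutations (bijections) of $\mathbb{N}$. *)

theory Defs
  imports "HOL-Analysis.Analysis"
begin

end

theory Submission
  imports Defs
begin

text \<open>
  For c > 0 the permutation is a product of disjoint transpositions, built greedily.
  Indices are put into a queue as long as the queued terms sum to less than c; once
  they reach c, an index N is swapped with the oldest queued index (which leaves the
  queue) provided x N \<le> 2^-k, where k is the number of swaps done so far.
  The N-th partial sum of x n - x (\<sigma> n) is then the sum of the queued terms minus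
  the sum of their future partners. The first tends to c: divergence makes the queue
  reach c again and again, it overshoots c by at most its last term, and all queued
  indices are at least the number of swaps, so their terms become small. The second
  tends to 0: distinct queued indices have partners from distinct later swaps, so it
  is dominated by a tail of the geometric series. Since x n \<rightarrow> 0, infinitely many
  swaps do happen.
\<close>

lemma sum_power_half_le:
  fixes F :: "nat set"
  assumes "finite F" and "F \<subseteq> {a..}"
  shows "(\<Sum>j\<in>F. (1/2::real) ^ j) \<le> 2 * (1/2) ^ a"
proof -
  let ?G = "(\<lambda>j. j - a) ` F"
  have "(\<Sum>j\<in>F. (1/2::real) ^ j) = (\<Sum>i\<in>?G. (1/2) ^ (a + i))"
    using assms(2) by (intro sum.reindex_bij_witness[of _ "\<lambda>i. a + i" "\<lambda>j. j - a"]) auto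
  also have "\<dots> = (1/2) ^ a * (\<Sum>i\<in>?G. (1/2) ^ i)"
    by (rule sum_power_add)
  also have "\<dots> \<le> (1/2) ^ a * 2"
    using geometric_sum_less[of "1/2::real" ?G] assms(1) by simp
  finally show ?thesis by simp
qed

lemma partial_sums_at_top_if_not_summable:
  fixes f :: "nat \<Rightarrow> real"
  assumes nonneg: "\<And>n. 0 \<le> f n" and "\<not> summable f"
  shows "filterlim (\<lambda>n. \<Sum>i<n. f i) at_top sequentially"
  unfolding filterlim_at_top eventually_sequentially
proof
  fix Z :: real
  obtain N where "Z \<le> (\<Sum>i<N. f i)"
    using summableI_nonneg_bounded[of f Z] nonneg assms(2) by (meson nle_le)
  moreover have "(\<Sum>i<N. f i) \<le> (\<Sum>i<n. f i)" if "N \<le> n" for n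
    using that nonneg by (intro sum_mono2) auto
  ultimately show "\<exists>N. \<forall>n\<ge>N. Z \<le> (\<Sum>i<n. f i)" by (meson order_trans)
qed

locale swap_rearrangement =
  fixes x :: "nat \<Rightarrow> real" and c :: real
  assumes pos: "\<And>n. x n > 0"
    and not_summable: "\<not> summable x"
    and tendsto_zero: "x \<longlonglongrightarrow> 0"
    and c_pos: "c > 0"
begin

fun state :: "nat \<Rightarrow> nat list \<times> nat" where
  "state 0 = ([], 0)"
| "state (Suc N) =
     (if sum_list (map x (fst (state N))) < c then (fst (state N) @ [N], snd (state N))
      else if fst (state N) \<noteq> [] \<and> x N \<le> (1/2) ^ snd (state N)
      then (tl (fst (state N)), Suc (snd (state N)))
      else state N)"

definition queue :: "nat \<Rightarrow> nat list" where
  "queue N = fst (state N)"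

definition swaps :: "nat \<Rightarrow> nat" where
  "swaps N = snd (state N)"

definition queue_sum :: "nat \<Rightarrow> real" where
  "queue_sum N = sum_list (map x (queue N))"

definition swap_at :: "nat \<Rightarrow> bool" where
  "swap_at N \<longleftrightarrow> \<not> queue_sum N < c \<and> queue N \<noteq> [] \<and> x N \<le> (1/2) ^ swaps N"

lemma queue_0 [simp]: "queue 0 = []" and swaps_0 [simp]: "swaps 0 = 0"
  by (simp_all add: queue_def swaps_def)

lemma queue_Suc:
  "queue (Suc N) =
     (if queue_sum N < c then queue N @ [N] else if swap_at N then tl (queue N) else queue N)"
  by (simp add: queue_def queue_sum_def swap_at_def swaps_def)

lemma swaps_Suc: "swaps (Suc N) = (if swap_at N then Suc (swaps N) else swaps N)"
  by (auto simp add: queue_def queue_sum_def swap_at_def swaps_def)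

lemma swap_at_queue_sum: "swap_at N \<Longrightarrow> c \<le> queue_sum N"
  by (simp add: swap_at_def)

lemma swap_at_queue_Cons:
  assumes "swap_at N"
  obtains h r where "queue N = h # r" and "queue (Suc N) = r"
  using assms by (cases "queue N") (auto simp: swap_at_def queue_Suc)

lemma queue_sorted_below: "sorted_wrt (<) (queue N) \<and> (\<forall>e\<in>set (queue N). e < N)"
proof (induction N)
  case 0 then show ?case by simp
next
  case (Suc N) then show ?case by (cases "queue N") (auto simp: queue_Suc sorted_wrt_append)
qed

lemma set_queue_Suc: "set (queue (Suc N)) \<subseteq> set (queue N) \<union> {N}"
  by (cases "queue N") (auto simp: queue_Suc)

lemma queued_queue_sum_less: "e \<in> set (queue N) \<Longrightarrow> queue_sum e < c"
proof (induction N)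
  case 0 then show ?case by simp
next
  case (Suc N)
  then show ?case
    using set_queue_Suc[of N] by (cases "queue N") (auto simp: queue_Suc split: if_splits)
qed

lemma queued_not_swap_at: "e \<in> set (queue N) \<Longrightarrow> \<not> swap_at e"
  using queued_queue_sum_less swap_at_queue_sum by (meson not_le)

lemma swaps_le: "swaps N \<le> N"
  by (induction N) (auto simp: swaps_Suc)

lemma swaps_le_queued: "e \<in> set (queue N) \<Longrightarrow> swaps N \<le> e"
proof (induction N arbitrary: e)
  case 0 then show ?case by simp
next
  case (Suc N)
  show ?case
  proof (cases "swap_at N")
    case True
    then obtain h r where qN: "queue N = h # r" and r: "queue (Suc N) = r"
      by (rule swap_at_queue_Cons)
    have "h < e" using queue_sorted_below[of N] qN r Suc.prems by simp
    moreover have "swaps N \<le> h" using Suc.IH qN by simp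
    ultimately show ?thesis using True by (simp add: swaps_Suc)
  next
    case False
    then show ?thesis
      using Suc swaps_le[of N] by (auto simp: queue_Suc swaps_Suc split: if_splits)
  qed
qed

lemma swapped_hd_less_queued:
  assumes "m < N" and "swap_at m" and "e \<in> set (queue N)"
  shows "hd (queue m) < e"
  using assms
proof (induction N arbitrary: e)
  case 0 then show ?case by simp
next
  case (Suc N)
  show ?case
  proof (cases "m = N")
    case True
    obtain h r where "queue m = h # r" "queue (Suc m) = r"
      using Suc.prems(2) by (rule swap_at_queue_Cons)
    then show ?thesis using queue_sorted_below[of m] True Suc.prems(3) by auto
  next
    case False
    then have "m < N" using Suc.prems(1) by simp
    moreover have "hd (queue m) < m"
      using queue_sorted_below[of m] Suc.prems(2) by (auto simp: swap_at_def)
    ultimately show ?thesis using Suc set_queue_Suc[of N] by auto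
  qed
qed

lemma queue_sum_overshoot:
  "queue_sum N < c \<or> (queue N \<noteq> [] \<and> queue_sum N < c + x (last (queue N)))"
proof (induction N)
  case 0 then show ?case using c_pos by (simp add: queue_sum_def)
next
  case (Suc N)
  consider "queue_sum N < c" | "swap_at N" | "\<not> queue_sum N < c" "\<not> swap_at N" by blast
  then show ?case
  proof cases
    case 1 then show ?thesis by (simp add: queue_Suc queue_sum_def)
  next
    case 2
    then obtain h r where qN: "queue N = h # r" and r: "queue (Suc N) = r"
      by (rule swap_at_queue_Cons)
    then have "queue_sum (Suc N) = queue_sum N - x h" by (simp add: queue_sum_def)
    then show ?thesis
      using Suc.IH 2 pos[of h] qN r c_pos by (cases "r = []") (auto simp: queue_sum_def swap_at_def)
  next
    case 3 then show ?thesis using Suc.IH by (simp add: queue_Suc queue_sum_def)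
  qed
qed

definition partner :: "nat \<Rightarrow> nat" where
  "partner N = (if swap_at N then hd (queue N)
     else if \<exists>m. swap_at m \<and> hd (queue m) = N then THE m. swap_at m \<and> hd (queue m) = N
     else N)"

lemma swapped_hd_inj: "swap_at m \<Longrightarrow> swap_at m' \<Longrightarrow> hd (queue m) = hd (queue m') \<Longrightarrow> m = m'"
  using swapped_hd_less_queued[of m m' "hd (queue m')"] swapped_hd_less_queued[of m' m "hd (queue m)"]
  by (metis linorder_neqE_nat list.set_sel(1) swap_at_def less_irrefl)

lemma partner_swap_at: "swap_at N \<Longrightarrow> partner N = hd (queue N)"
  by (simp add: partner_def)

lemma partner_swapped_hd:
  assumes "swap_at m"
  shows "partner (hd (queue m)) = m"
proof -
  have "\<not> swap_at (hd (queue m))"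
    using assms queued_not_swap_at by (metis list.set_sel(1) swap_at_def)
  moreover have "(THE m'. swap_at m' \<and> hd (queue m') = hd (queue m)) = m"
    using assms swapped_hd_inj by (intro the_equality) auto
  ultimately show ?thesis using assms by (auto simp: partner_def)
qed

lemma partner_partner: "partner (partner N) = N"
proof (cases "swap_at N \<or> (\<exists>m. swap_at m \<and> hd (queue m) = N)")
  case True
  then show ?thesis using partner_swap_at partner_swapped_hd by metis
next
  case False
  then have "partner N = N" by (auto simp: partner_def)
  then show ?thesis by simp
qed

lemma bij_partner: "bij partner"
  by (rule o_bij[of partner]) (auto simp: partner_partner fun_eq_iff)

lemma partial_sum_eq_queue:
  "(\<Sum>i<N. x i - x (partner i)) = (\<Sum>e\<leftarrow>queue N. x e - x (partner e))"
proof (induction N)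
  case 0 then show ?case by simp
next
  case (Suc N)
  consider "queue_sum N < c" | "swap_at N" | "\<not> queue_sum N < c" "\<not> swap_at N" by blast
  then show ?case
  proof cases
    case 1 then show ?thesis using Suc by (simp add: queue_Suc)
  next
    case 2
    then obtain h r where qN: "queue N = h # r" and r: "queue (Suc N) = r"
      by (rule swap_at_queue_Cons)
    then have "partner N = h" "partner h = N"
      using partner_swap_at[OF 2] partner_swapped_hd[OF 2] by simp_all
    then show ?thesis using Suc qN r by simp
  next
    case 3
    have "partner N = N"
      using 3 queued_queue_sum_less by (auto simp: partner_def swap_at_def dest: list.set_sel(1))
    then show ?thesis using Suc 3 by (simp add: queue_Suc)
  qed
qed

lemma swaps_mono: "N \<le> M \<Longrightarrow> swaps N \<le> swaps M"
  by (rule lift_Suc_mono_le) (simp_all add: swaps_Suc)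

lemma swaps_less_after_swap: "m < M \<Longrightarrow> swap_at m \<Longrightarrow> swaps m < swaps M"
  using swaps_mono[of "Suc m" M] by (simp add: swaps_Suc)

lemma queue_sum_reaches_c: "\<exists>M\<ge>N. c \<le> queue_sum M"
proof (rule ccontr)
  assume "\<not> ?thesis"
  then have below: "queue_sum M < c" if "N \<le> M" for M
    using that by force
  have grow: "queue_sum M = queue_sum N + (\<Sum>i\<in>{N..<M}. x i)" if "N \<le> M" for M
    using that
  proof (induction M rule: dec_induct)
    case base then show ?case by simp
  next
    case (step M) then show ?case using below[of M] by (simp add: queue_Suc queue_sum_def)
  qed
  have "eventually (\<lambda>M. c - queue_sum N + (\<Sum>i<N. x i) \<le> (\<Sum>i<M. x i)) sequentially"
    using partial_sums_at_top_if_not_summable[OF _ not_summable] pos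
    by (simp add: filterlim_at_top less_imp_le)
  from eventually_conj[OF this eventually_ge_at_top[of N]]
  obtain M where M: "N \<le> M" "c - queue_sum N + (\<Sum>i<N. x i) \<le> (\<Sum>i<M. x i)"
    by (auto simp: eventually_sequentially)
  have "(\<Sum>i<M. x i) = (\<Sum>i<N. x i) + (\<Sum>i\<in>{N..<M}. x i)"
    using M(1) by (metis sum.atLeastLessThan_concat zero_le lessThan_atLeast0)
  then show False using grow[OF M(1)] below[OF M(1)] M(2) by linarith
qed

lemma exists_swap_after: "\<exists>m\<ge>N. swap_at m"
proof (rule ccontr)
  assume "\<not> ?thesis"
  obtain M where M: "N \<le> M" "c \<le> queue_sum M" using queue_sum_reaches_c by blast
  with \<open>\<not> ?thesis\<close> have no_swap: "\<not> swap_at k" if "M \<le> k" for k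
    using that by auto
  have frozen: "queue k = queue M \<and> swaps k = swaps M" if "M \<le> k" for k
    using that
  proof (induction k rule: dec_induct)
    case base then show ?case by simp
  next
    case (step k)
    then have "queue_sum k = queue_sum M" by (simp add: queue_sum_def)
    then show ?case using step M(2) no_swap[of k] by (simp add: queue_Suc swaps_Suc)
  qed
  have "queue M \<noteq> []" using M(2) c_pos by (auto simp: queue_sum_def)
  have "eventually (\<lambda>k. x k < (1/2) ^ swaps M) sequentially"
    using tendsto_zero by (rule order_tendstoD) simp
  from eventually_conj[OF this eventually_ge_at_top[of M]]
  obtain k where "M \<le> k" "x k < (1/2) ^ swaps M"
    by (auto simp: eventually_sequentially)
  then have "swap_at k"
    using frozen[of k] M(2) \<open>queue M \<noteq> []\<close> by (simp add: swap_at_def queue_sum_def)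
  with no_swap \<open>M \<le> k\<close> show False by blast
qed

lemma next_swap_extends_queue: "\<exists>m\<ge>N. swap_at m \<and> (\<exists>ys. queue m = queue N @ ys)"
proof -
  define m where "m = (LEAST m. N \<le> m \<and> swap_at m)"
  have m: "N \<le> m" "swap_at m"
    using LeastI_ex[OF exists_swap_after[of N]] unfolding m_def by auto
  have "\<exists>ys. queue k = queue N @ ys" if "N \<le> k" "k \<le> m" for k
    using that
  proof (induction k rule: dec_induct)
    case base then show ?case by simp
  next
    case (step k)
    then have "k < m" by simp
    then have "\<not> (N \<le> k \<and> swap_at k)" unfolding m_def by (rule not_less_Least)
    with step show ?case by (auto simp: queue_Suc)
  qed
  with m show ?thesis by blast
qed

lemma queued_eventually_swapped:
  "p < length (queue N) \<Longrightarrow> \<exists>m\<ge>N. swap_at m \<and> hd (queue m) = queue N ! p"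
proof (induction p arbitrary: N)
  case 0
  obtain m ys where m: "N \<le> m" "swap_at m" and ys: "queue m = queue N @ ys"
    using next_swap_extends_queue by blast
  have "hd (queue m) = queue N ! 0"
    using ys 0 by (simp add: hd_conv_nth nth_append)
  with m show ?case by blast
next
  case (Suc p)
  obtain m ys where m: "N \<le> m" "swap_at m" and ys: "queue m = queue N @ ys"
    using next_swap_extends_queue by blast
  obtain h r where hr: "queue m = h # r" and r: "queue (Suc m) = r"
    using m(2) by (rule swap_at_queue_Cons)
  have "queue N \<noteq> []" using Suc.prems by auto
  then have "r = tl (queue N) @ ys"
    using hr ys by (metis list.sel(3) tl_append2)
  then have p: "p < length (queue (Suc m))" and "queue (Suc m) ! p = queue N ! Suc p"
    using r Suc.prems by (auto simp: nth_append nth_tl)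
  moreover obtain m' where "Suc m \<le> m'" "swap_at m'" "hd (queue m') = queue (Suc m) ! p"
    using Suc.IH[OF p] by blast
  moreover have "N \<le> m'" using m(1) \<open>Suc m \<le> m'\<close> by simp
  ultimately show ?case by auto
qed

lemma partner_queued:
  assumes "e \<in> set (queue N)"
  shows "swap_at (partner e) \<and> N \<le> partner e"
proof -
  obtain p where p: "p < length (queue N)" and "queue N ! p = e"
    using assms by (meson in_set_conv_nth)
  with queued_eventually_swapped[OF p] obtain m where m: "N \<le> m" "swap_at m" and "hd (queue m) = e"
    by auto
  then have "partner e = m" using partner_swapped_hd by blast
  with m show ?thesis by simp
qed

definition partner_sum :: "nat \<Rightarrow> real" where
  "partner_sum N = (\<Sum>e\<leftarrow>queue N. x (partner e))"

lemma partner_sum_eq_sum_set: "partner_sum N = (\<Sum>e\<in>set (queue N). x (partner e))"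
proof -
  have "distinct (queue N)" using queue_sorted_below[of N] strict_sorted_iff by blast
  then show ?thesis by (simp add: partner_sum_def sum_list_distinct_conv_sum_set)
qed

lemma partner_sum_nonneg: "0 \<le> partner_sum N"
  unfolding partner_sum_eq_sum_set by (intro sum_nonneg) (simp add: less_imp_le pos)

lemma partner_sum_le: "partner_sum N \<le> 2 * (1/2) ^ swaps N"
proof -
  let ?g = "\<lambda>e. swaps (partner e)"
  have "inj_on ?g (set (queue N))"
  proof (rule inj_onI)
    fix e e' assume "e \<in> set (queue N)" "e' \<in> set (queue N)" "?g e = ?g e'"
    then have "swap_at (partner e)" "swap_at (partner e')" "?g e = ?g e'"
      using partner_queued by blast+
    then have "partner e = partner e'"
      by (cases rule: linorder_cases[of "partner e" "partner e'"])
        (auto dest: swaps_less_after_swap)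
    then show "e = e'" by (metis partner_partner)
  qed
  have "(\<Sum>e\<in>set (queue N). x (partner e)) \<le> (\<Sum>e\<in>set (queue N). (1/2) ^ ?g e)"
    by (rule sum_mono) (use partner_queued in \<open>auto simp: swap_at_def\<close>)
  also have "\<dots> = (\<Sum>j\<in>?g ` set (queue N). (1/2) ^ j)"
    by (simp add: sum.reindex[OF \<open>inj_on ?g _\<close>])
  also have "\<dots> \<le> 2 * (1/2) ^ swaps N"
    by (rule sum_power_half_le) (use partner_queued swaps_mono in auto)
  finally show ?thesis by (simp add: partner_sum_eq_sum_set)
qed

lemma swaps_at_top: "filterlim swaps at_top sequentially"
  unfolding filterlim_at_top eventually_sequentially
proof
  fix K
  show "\<exists>N. \<forall>n\<ge>N. K \<le> swaps n"
  proof (induction K)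
    case 0 then show ?case by simp
  next
    case (Suc K)
    then obtain N where N: "\<forall>n\<ge>N. K \<le> swaps n" by blast
    obtain m where m: "N \<le> m" "swap_at m" using exists_swap_after by blast
    have "Suc K \<le> swaps n" if "Suc m \<le> n" for n
      using N m swaps_less_after_swap[of m n] that by fastforce
    then show ?case by blast
  qed
qed

lemma partner_sum_tendsto_zero: "partner_sum \<longlonglongrightarrow> 0"
proof (rule tendsto_sandwich[of "\<lambda>_. 0" _ _ "\<lambda>N. 2 * (1/2) ^ swaps N"])
  have "(\<lambda>k. (1/2::real) ^ k) \<longlonglongrightarrow> 0" by (rule LIMSEQ_power_zero) simp
  then have "(\<lambda>N. (1/2::real) ^ swaps N) \<longlonglongrightarrow> 0"
    using swaps_at_top by (rule filterlim_compose)
  then show "(\<lambda>N. 2 * (1/2::real) ^ swaps N) \<longlonglongrightarrow> 0"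
    by (rule tendsto_mult_right_zero)
qed (use partner_sum_nonneg partner_sum_le in auto)

lemma queued_eventually_small:
  assumes "\<epsilon> > 0"
  shows "eventually (\<lambda>n. \<forall>e\<in>set (queue n). x e < \<epsilon>) sequentially"
proof -
  obtain K where K: "\<And>n. K \<le> n \<Longrightarrow> x n < \<epsilon>"
    using order_tendstoD(2)[OF tendsto_zero assms] by (auto simp: eventually_sequentially)
  have "eventually (\<lambda>n. K \<le> swaps n) sequentially"
    using swaps_at_top by (simp add: filterlim_at_top)
  then show ?thesis
    by (rule eventually_mono) (use K swaps_le_queued order_trans in blast)
qed

lemma queue_sum_eventually_less:
  assumes "\<epsilon> > 0"
  shows "eventually (\<lambda>n. queue_sum n < c + \<epsilon>) sequentially"
  using queued_eventually_small[OF assms]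
proof (rule eventually_mono)
  fix n assume "\<forall>e\<in>set (queue n). x e < \<epsilon>"
  then show "queue_sum n < c + \<epsilon>"
    using queue_sum_overshoot[of n] assms by (fastforce dest: last_in_set)
qed

lemma queue_sum_eventually_greater:
  assumes "\<epsilon> > 0"
  shows "eventually (\<lambda>n. c - \<epsilon> < queue_sum n) sequentially"
proof -
  obtain N where small: "\<And>n e. N \<le> n \<Longrightarrow> e \<in> set (queue n) \<Longrightarrow> x e < \<epsilon>"
    using queued_eventually_small[OF assms] by (auto simp: eventually_sequentially)
  obtain m where m: "N \<le> m" "swap_at m" using exists_swap_after by blast
  have "c - \<epsilon> < queue_sum n" if "m \<le> n" for n
    using that
  proof (induction n rule: dec_induct)
    case base then show ?case using swap_at_queue_sum[OF m(2)] assms by simp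
  next
    case (step n)
    consider "queue_sum n < c" | "swap_at n" | "\<not> queue_sum n < c" "\<not> swap_at n" by blast
    then show ?case
    proof cases
      case 1 then show ?thesis using step.IH pos[of n] by (simp add: queue_Suc queue_sum_def)
    next
      case 2
      then obtain h r where qn: "queue n = h # r" and r: "queue (Suc n) = r"
        by (rule swap_at_queue_Cons)
      have "x h < \<epsilon>" using small[of n h] step.hyps m(1) qn by simp
      then show ?thesis using swap_at_queue_sum[OF 2] qn r by (simp add: queue_sum_def)
    next
      case 3 then show ?thesis using step.IH by (simp add: queue_Suc queue_sum_def)
    qed
  qed
  then show ?thesis unfolding eventually_sequentially by blast
qed

lemma queue_sum_tendsto: "queue_sum \<longlonglongrightarrow> c"
proof (rule order_tendstoI)
  fix a assume "a < c"
  then show "eventually (\<lambda>n. a < queue_sum n) sequentially"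
    using queue_sum_eventually_greater[of "c - a"] by simp
next
  fix a assume "c < a"
  then show "eventually (\<lambda>n. queue_sum n < a) sequentially"
    using queue_sum_eventually_less[of "a - c"] by simp
qed

lemma partner_sums: "(\<lambda>n. x n - x (partner n)) sums c"
proof -
  have "(\<Sum>i<N. x i - x (partner i)) = queue_sum N - partner_sum N" for N
    by (simp add: partial_sum_eq_queue queue_sum_def partner_sum_def sum_list_subtractf)
  moreover have "(\<lambda>N. queue_sum N - partner_sum N) \<longlonglongrightarrow> c - 0"
    by (intro tendsto_diff queue_sum_tendsto partner_sum_tendsto_zero)
  ultimately show ?thesis by (simp add: sums_def)
qed

end

theorem mainTheorem3:
  fixes x :: "nat \<Rightarrow> real" and c :: real
  assumes pos: "\<And>n. x n > 0"
    and div: "\<not> summable x"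
    and lim: "x \<longlonglongrightarrow> 0"
    and c: "c \<ge> 0"
  shows "\<exists>\<sigma>. bij \<sigma> \<and> (\<lambda>n. x n - x (\<sigma> n)) sums c"
proof (cases "c = 0")
  case True
  then have "(\<lambda>n. x n - x (id n)) sums c" by simp
  then show ?thesis using bij_id by blast
next
  case False
  with c interpret swap_rearrangement x c
    using pos div lim by unfold_locales auto
  show ?thesis using bij_partner partner_sums by blast
qed

end
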